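(* Let $Y$ be a $T_1$ topological space with a continuous action of a discrete group $G$ such that the isotropy group of each point is finite, let $\Gamma$ be a finitely generated discrete group, and let $\mathcal G=G\ltimes Y$. Then $\mathcal G^\Gamma$ is isomorphic as a topological groupoid to $G\ltimes\coprod_{\phi\in\mathrm{HOM}(\Gamma,G)}\big(Y^{\langle\phi\rangle},\phi\big)$, where $G$ acts by $g\cdot(y,\phi)=(gy,g\phi g^{-1})$.
   Context: For a topological groupoid $\mathcal G$ (objects $G_0$, arrows $G_1$, isotropy groups $G_x$), $\mathcal S^\Gamma_{\mathcal G}$ is the set of pairs of a point $x\in G_0$ and a homomorphism $\phi_x:\Gamma\to G_x$, topologized with the weak topology induced by the map $\phi_x\mapsto x\in G_0$ and, for each $\gamma\in\Gamma$, the evaluation maps $\phi_x\mapsto\phi_x(\gamma)\in G_1$. $\mathcal G$ acts on $\mathcal S^\Gamma_{\mathcal G}$ by conjugation: for $g\in G_1$ with $s(g)=x$, $g\cdot\phi_x$ is $\gamma\mapsto g\phi_x(\gamma)g^{-1}\in G_{t(g)}$. The $\Gamma$-sector groupoid is the translation groupoid $\mathcal G^\Gamma=\mathcal G\ltimes\mathcal S^\Gamma_{\mathcal G}$. $Y^{\langle\phi\rangle}$ denotes the fixed-point set of $\phi(\Gamma)$ in $Y$ (with the subspace topology), and $(Y^{\langle\phi\rangle},\phi)$ a copy of it labelled by $\phi$. *)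

theory Defs
  imports "HOL-Analysis.Analysis" "HOL-Algebra.Group_Action" "HOL-Algebra.Generated_Groups"
begin

text \<open>Objects are the points of tg_obj, arrows the points of tg_arr.
  tg_comp h g is "h after g", defined when tg_src h = tg_tgt g.\<close>

record ('o, 'a) tgpd =
  tg_obj  :: "'o topology"
  tg_arr  :: "'a topology"
  tg_src  :: "'a \<Rightarrow> 'o"
  tg_tgt  :: "'a \<Rightarrow> 'o"
  tg_comp :: "'a \<Rightarrow> 'a \<Rightarrow> 'a"
  tg_id   :: "'o \<Rightarrow> 'a"
  tg_inv  :: "'a \<Rightarrow> 'a"

definition tgpd_iso :: "('o1,'a1) tgpd \<Rightarrow> ('o2,'a2) tgpd \<Rightarrow> ('o1 \<Rightarrow> 'o2) \<Rightarrow> ('a1 \<Rightarrow> 'a2) \<Rightarrow> bool" where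
  "tgpd_iso A B F0 F1 \<longleftrightarrow>
     homeomorphic_map (tg_obj A) (tg_obj B) F0 \<and>
     homeomorphic_map (tg_arr A) (tg_arr B) F1 \<and>
     (\<forall>a\<in>topspace (tg_arr A). tg_src B (F1 a) = F0 (tg_src A a) \<and> tg_tgt B (F1 a) = F0 (tg_tgt A a)) \<and>
     (\<forall>a\<in>topspace (tg_arr A). \<forall>b\<in>topspace (tg_arr A). tg_src A b = tg_tgt A a \<longrightarrow>
          F1 (tg_comp A b a) = tg_comp B (F1 b) (F1 a)) \<and>
     (\<forall>x\<in>topspace (tg_obj A). F1 (tg_id A x) = tg_id B (F0 x))"

definition tgpd_isomorphic :: "('o1,'a1) tgpd \<Rightarrow> ('o2,'a2) tgpd \<Rightarrow> bool" where
  "tgpd_isomorphic A B \<longleftrightarrow> (\<exists>F0 F1. tgpd_iso A B F0 F1)"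

definition action_gpd :: "('g,'m) monoid_scheme \<Rightarrow> ('g \<Rightarrow> 'y \<Rightarrow> 'y) \<Rightarrow> 'y topology \<Rightarrow> ('y, 'g \<times> 'y) tgpd" where
  "action_gpd G act X =
    \<lparr> tg_obj = X,
      tg_arr = prod_topology (discrete_topology (carrier G)) X,
      tg_src = (\<lambda>(g,y). y),
      tg_tgt = (\<lambda>(g,y). act g y),
      tg_comp = (\<lambda>(h,y') (g,y). (h \<otimes>\<^bsub>G\<^esub> g, y)),
      tg_id = (\<lambda>y. (\<one>\<^bsub>G\<^esub>, y)),
      tg_inv = (\<lambda>(g,y). (inv\<^bsub>G\<^esub> g, act g y)) \<rparr>"

definition isotropy :: "('o,'a) tgpd \<Rightarrow> 'o \<Rightarrow> 'a monoid" where
  "isotropy Gd x = \<lparr> carrier = {a\<in>topspace (tg_arr Gd). tg_src Gd a = x \<and> tg_tgt Gd a = x},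
                     mult = tg_comp Gd, one = tg_id Gd x \<rparr>"

text \<open>Points of S^Gamma: pairs (x, phi_x) with phi_x : Gamma -> G_x a homomorphism
  (represented extensionally on the carrier of Gamma).\<close>
definition sector_points :: "('c,'m) monoid_scheme \<Rightarrow> ('o,'a) tgpd \<Rightarrow> ('o \<times> ('c \<Rightarrow> 'a)) set" where
  "sector_points Gam Gd = {(x, \<phi>). x \<in> topspace (tg_obj Gd) \<and>
        \<phi> \<in> hom Gam (isotropy Gd x) \<and> \<phi> \<in> extensional (carrier Gam)}"

definition sector_top :: "('c,'m) monoid_scheme \<Rightarrow> ('o,'a) tgpd \<Rightarrow> ('o \<times> ('c \<Rightarrow> 'a)) topology" where
  "sector_top Gam Gd = pullback_topology (sector_points Gam Gd)
      (\<lambda>(x,\<phi>). (x, \<lambda>\<gamma>\<in>carrier Gam. \<phi> \<gamma>))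
      (prod_topology (tg_obj Gd) (product_topology (\<lambda>_. tg_arr Gd) (carrier Gam)))"

definition sector_act :: "('c,'m) monoid_scheme \<Rightarrow> ('o,'a) tgpd \<Rightarrow> 'a \<Rightarrow> ('o \<times> ('c \<Rightarrow> 'a)) \<Rightarrow> ('o \<times> ('c \<Rightarrow> 'a))" where
  "sector_act Gam Gd g p = (tg_tgt Gd g,
      \<lambda>\<gamma>\<in>carrier Gam. tg_comp Gd (tg_comp Gd g (snd p \<gamma>)) (tg_inv Gd g))"

definition sector_gpd :: "('c,'m) monoid_scheme \<Rightarrow> ('o,'a) tgpd \<Rightarrow>
    ('o \<times> ('c \<Rightarrow> 'a), 'a \<times> ('o \<times> ('c \<Rightarrow> 'a))) tgpd" where
  "sector_gpd Gam Gd =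
    \<lparr> tg_obj = sector_top Gam Gd,
      tg_arr = subtopology (prod_topology (tg_arr Gd) (sector_top Gam Gd))
                 {(a, p). tg_src Gd a = fst p},
      tg_src = (\<lambda>(a,p). p),
      tg_tgt = (\<lambda>(a,p). sector_act Gam Gd a p),
      tg_comp = (\<lambda>(b,q) (a,p). (tg_comp Gd b a, p)),
      tg_id = (\<lambda>p. (tg_id Gd (fst p), p)),
      tg_inv = (\<lambda>(a,p). (tg_inv Gd a, sector_act Gam Gd a p)) \<rparr>"

definition HOMs :: "('c,'m) monoid_scheme \<Rightarrow> ('g,'n) monoid_scheme \<Rightarrow> ('c \<Rightarrow> 'g) set" where
  "HOMs Gam G = hom Gam G \<inter> extensional (carrier Gam)"

definition fixset :: "('c,'m) monoid_scheme \<Rightarrow> ('g \<Rightarrow> 'y \<Rightarrow> 'y) \<Rightarrow> 'y topology \<Rightarrow> ('c \<Rightarrow> 'g) \<Rightarrow> 'y set" where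
  "fixset Gam act Y \<phi> = {y\<in>topspace Y. \<forall>\<gamma>\<in>carrier Gam. act (\<phi> \<gamma>) y = y}"

text \<open>Coproduct over phi in HOM(Gamma,G) of (Y^<phi>, phi); points are pairs (phi, y).\<close>
definition fix_coprod :: "('c,'m) monoid_scheme \<Rightarrow> ('g,'n) monoid_scheme \<Rightarrow> ('g \<Rightarrow> 'y \<Rightarrow> 'y) \<Rightarrow> 'y topology
     \<Rightarrow> (('c \<Rightarrow> 'g) \<times> 'y) topology" where
  "fix_coprod Gam G act Y = sum_topology (\<lambda>\<phi>. subtopology Y (fixset Gam act Y \<phi>)) (HOMs Gam G)"

definition fix_act :: "('c,'m) monoid_scheme \<Rightarrow> ('g,'n) monoid_scheme \<Rightarrow> ('g \<Rightarrow> 'y \<Rightarrow> 'y)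
     \<Rightarrow> 'g \<Rightarrow> (('c \<Rightarrow> 'g) \<times> 'y) \<Rightarrow> (('c \<Rightarrow> 'g) \<times> 'y)" where
  "fix_act Gam G act g p = (\<lambda>\<gamma>\<in>carrier Gam. g \<otimes>\<^bsub>G\<^esub> fst p \<gamma> \<otimes>\<^bsub>G\<^esub> inv\<^bsub>G\<^esub> g, act g (snd p))"

end

theory Submission
  imports Defs
begin

(* For the action groupoid G \<ltimes> Y the isotropy group at y is Stab(y) \<times> {y}, so a point
   (y, \<phi>) of S^\<Gamma> is the same thing as a homomorphism \<psi> : \<Gamma> \<rightarrow> G (the first component
   of \<phi>) together with a point y fixed by \<psi>(\<Gamma>). The maps
       sector_to_fix (y, \<phi>) = (\<psi>, y)       fix_to_sector (\<psi>, y) = (y, \<gamma> \<mapsto> (\<psi> \<gamma>, y))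
   are mutually inverse bijections S^\<Gamma> \<leftrightarrow> \<coprod>_\<psi> Y^<\<psi>>, equivariant for the conjugation
   actions. fix_to_sector is continuous because every evaluation of it is; the hard
   direction is continuity of sector_to_fix: as \<Gamma> is finitely generated, a homomorphism
   is determined by its values on finitely many generators, so each fibre {\<psi> = const}
   is a finite intersection of preimages of the discrete factor G, hence open. *)

text \<open>Two homomorphisms of groups that agree on a set S agree on the subgroup it generates;
  this is how finite generation of \<Gamma> enters the argument.\<close>

lemma hom_eq_on_generate:
  assumes "group Gam" "group G" "f \<in> hom Gam G" "g \<in> hom Gam G" "S \<subseteq> carrier Gam"
    and "\<forall>s\<in>S. f s = g s" "x \<in> generate Gam S"
  shows "f x = g x"
  using assms(7)
proof (induction rule: generate.induct)
  have f: "group_hom Gam G f" and g: "group_hom Gam G g"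
    by (simp_all add: group_hom_def group_hom_axioms_def assms)
  {
    case one
    show ?case using group_hom.hom_one[OF f] group_hom.hom_one[OF g] by simp
  next
    case (incl h)
    then show ?case using assms(6) by auto
  next
    case (inv h)
    then have "h \<in> carrier Gam" using assms(5) by auto
    then show ?case using group_hom.hom_inv[OF f] group_hom.hom_inv[OF g] inv assms(6) by simp
  next
    case (eng h1 h2)
    have "h1 \<in> carrier Gam" "h2 \<in> carrier Gam"
      using eng group.generate_incl[OF assms(1,5)] by auto
    then show ?case using eng assms(3,4) by (simp add: hom_mult)
  }
qed

lemma continuous_map_from_sum_topology:
  assumes "\<And>i. i \<in> I \<Longrightarrow> continuous_map (X i) Z (\<lambda>x. f (i, x))"
  shows "continuous_map (sum_topology X I) Z f"
  unfolding continuous_map_def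
proof (intro conjI allI impI)
  show "f \<in> topspace (sum_topology X I) \<rightarrow> topspace Z"
    using assms by (force simp: continuous_map_def)
  fix W assume W: "openin Z W"
  have "openin (X i) {x. (i, x) \<in> {p \<in> topspace (sum_topology X I). f p \<in> W}}" if "i \<in> I" for i
  proof -
    have "{x. (i, x) \<in> {p \<in> topspace (sum_topology X I). f p \<in> W}} = {x \<in> topspace (X i). f (i, x) \<in> W}"
      using that by auto
    then show ?thesis using openin_continuous_map_preimage[OF assms[OF that] W] by simp
  qed
  then show "openin (sum_topology X I) {p \<in> topspace (sum_topology X I). f p \<in> W}"
    unfolding openin_sum_topology by auto
qed

lemma continuous_map_into_sum_topology:
  assumes into: "f \<in> topspace T \<rightarrow> Sigma I (topspace \<circ> X)"
    and fibre_open: "\<And>i. i \<in> I \<Longrightarrow> openin T {p \<in> topspace T. fst (f p) = i}"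
    and fibre_cont: "\<And>i. i \<in> I \<Longrightarrow>
          continuous_map (subtopology T {p \<in> topspace T. fst (f p) = i}) (X i) (snd \<circ> f)"
  shows "continuous_map T (sum_topology X I) f"
  unfolding continuous_map_def
proof (intro conjI allI impI)
  show "f \<in> topspace T \<rightarrow> topspace (sum_topology X I)" using into by simp
  fix U assume "openin (sum_topology X I) U"
  then obtain V where U: "U = Sigma I V" and V: "\<And>i. i \<in> I \<Longrightarrow> openin (X i) (V i)"
    unfolding openin_sum_topology_alt by blast
  define E where "E i = {p \<in> topspace T. fst (f p) = i}" for i
  have piece: "openin T {p \<in> E i. snd (f p) \<in> V i}" if i: "i \<in> I" for i
  proof -
    have "openin (subtopology T (E i)) {p \<in> topspace (subtopology T (E i)). (snd \<circ> f) p \<in> V i}"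
      using openin_continuous_map_preimage[OF fibre_cont[OF i] V[OF i]] by (simp add: E_def)
    then show ?thesis
      using openin_open_subtopology[OF fibre_open[OF i]] by (auto simp: E_def)
  qed
  have "{p \<in> topspace T. f p \<in> U} = (\<Union>i\<in>I. {p \<in> E i. snd (f p) \<in> V i})"
    using into by (force simp: U E_def)
  then show "openin T {p \<in> topspace T. f p \<in> U}" using piece by auto
qed

section \<open>The space S^\<Gamma> of an arbitrary groupoid\<close>

lemma topspace_sector_top: "topspace (sector_top Gam Gd) = sector_points Gam Gd"
proof -
  have "(x, \<lambda>\<gamma>\<in>carrier Gam. \<phi> \<gamma>)
        \<in> topspace (prod_topology (tg_obj Gd) (product_topology (\<lambda>_. tg_arr Gd) (carrier Gam)))"
    if "(x, \<phi>) \<in> sector_points Gam Gd" for x \<phi>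
    using that by (auto simp: sector_points_def isotropy_def hom_def)
  then show ?thesis unfolding sector_top_def topspace_pullback_topology by auto
qed

lemma continuous_map_sector_base: "continuous_map (sector_top Gam Gd) (tg_obj Gd) fst"
proof -
  have "continuous_map (sector_top Gam Gd) (tg_obj Gd) (fst \<circ> (\<lambda>(x,\<phi>). (x, \<lambda>\<gamma>\<in>carrier Gam. \<phi> \<gamma>)))"
    unfolding sector_top_def by (rule continuous_map_pullback[OF continuous_map_fst])
  then show ?thesis by (rule continuous_map_eq) (simp add: split_beta)
qed

lemma continuous_map_sector_eval:
  assumes "\<gamma> \<in> carrier Gam"
  shows "continuous_map (sector_top Gam Gd) (tg_arr Gd) (\<lambda>p. snd p \<gamma>)"
proof -
  have "continuous_map (prod_topology (tg_obj Gd) (product_topology (\<lambda>_. tg_arr Gd) (carrier Gam)))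
          (tg_arr Gd) ((\<lambda>f. f \<gamma>) \<circ> snd)"
    using continuous_map_product_projection[OF assms, of "\<lambda>_. tg_arr Gd"]
    by (intro continuous_map_compose[OF continuous_map_snd]) simp
  then have "continuous_map (sector_top Gam Gd) (tg_arr Gd)
               (((\<lambda>f. f \<gamma>) \<circ> snd) \<circ> (\<lambda>(x,\<phi>). (x, \<lambda>\<gamma>\<in>carrier Gam. \<phi> \<gamma>)))"
    unfolding sector_top_def by (rule continuous_map_pullback)
  then show ?thesis by (rule continuous_map_eq) (simp add: split_beta assms)
qed

section \<open>Sector points of an action groupoid\<close>

text \<open>For G \<ltimes> Y the isotropy group at y is Stab(y) \<times> {y}; hence a sector point (y, \<phi>)
  consists of a homomorphism into G (first components) whose image fixes y.\<close>

lemma action_sector_points_iff: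
  "(y, \<phi>) \<in> sector_points Gam (action_gpd G act Y) \<longleftrightarrow>
     y \<in> topspace Y \<and> \<phi> \<in> extensional (carrier Gam) \<and>
     (\<forall>\<gamma>\<in>carrier Gam. fst (\<phi> \<gamma>) \<in> carrier G \<and> snd (\<phi> \<gamma>) = y \<and> act (fst (\<phi> \<gamma>)) y = y) \<and>
     (\<forall>a\<in>carrier Gam. \<forall>b\<in>carrier Gam. \<phi> (a \<otimes>\<^bsub>Gam\<^esub> b) = (fst (\<phi> a) \<otimes>\<^bsub>G\<^esub> fst (\<phi> b), y))"
  unfolding sector_points_def hom_def isotropy_def Pi_def
  by (auto simp add: action_gpd_def split_beta mem_Times_iff)

lemma topspace_fix_coprod: "topspace (fix_coprod Gam G act Y) = Sigma (HOMs Gam G) (fixset Gam act Y)"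
  unfolding fix_coprod_def by (auto simp: fixset_def)

definition sector_to_fix :: "('c,'m) monoid_scheme \<Rightarrow> ('y \<times> ('c \<Rightarrow> 'g \<times> 'y)) \<Rightarrow> (('c \<Rightarrow> 'g) \<times> 'y)" where
  "sector_to_fix Gam p = ((\<lambda>\<gamma>\<in>carrier Gam. fst (snd p \<gamma>)), fst p)"

definition fix_to_sector :: "('c,'m) monoid_scheme \<Rightarrow> (('c \<Rightarrow> 'g) \<times> 'y) \<Rightarrow> ('y \<times> ('c \<Rightarrow> 'g \<times> 'y))" where
  "fix_to_sector Gam q = (snd q, \<lambda>\<gamma>\<in>carrier Gam. (fst q \<gamma>, snd q))"

lemma sector_to_fix_in:
  assumes "group Gam" "p \<in> sector_points Gam (action_gpd G act Y)"
  shows "sector_to_fix Gam p \<in> Sigma (HOMs Gam G) (fixset Gam act Y)"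
proof -
  obtain y \<phi> where p: "p = (y, \<phi>)" by fastforce
  show ?thesis using assms(2) unfolding p action_sector_points_iff sector_to_fix_def HOMs_def fixset_def hom_def
    by (auto simp: monoid.m_closed[OF group.is_monoid[OF assms(1)]])
qed

lemma fix_to_sector_in:
  assumes "group Gam" "q \<in> Sigma (HOMs Gam G) (fixset Gam act Y)"
  shows "fix_to_sector Gam q \<in> sector_points Gam (action_gpd G act Y)"
proof -
  obtain \<psi> y where q: "q = (\<psi>, y)" by fastforce
  show ?thesis using assms(2) unfolding q fix_to_sector_def action_sector_points_iff HOMs_def fixset_def hom_def
    by (auto simp: monoid.m_closed[OF group.is_monoid[OF assms(1)]])
qed

lemma fix_to_sector_to_fix:
  assumes "p \<in> sector_points Gam (action_gpd G act Y)"
  shows "fix_to_sector Gam (sector_to_fix Gam p) = p"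
proof -
  obtain y \<phi> where p: "p = (y, \<phi>)" by fastforce
  note pt = assms[unfolded p action_sector_points_iff]
  have "fix_to_sector Gam (sector_to_fix Gam p) = (y, \<lambda>\<gamma>\<in>carrier Gam. (fst (\<phi> \<gamma>), y))"
    unfolding p by (simp add: fix_to_sector_def sector_to_fix_def fun_eq_iff)
  also have "\<dots> = p"
    using pt unfolding p by (force simp: extensional_def fun_eq_iff prod_eq_iff)
  finally show ?thesis .
qed

lemma sector_to_fix_to_sector:
  assumes "q \<in> Sigma (HOMs Gam G) (fixset Gam act Y)"
  shows "sector_to_fix Gam (fix_to_sector Gam q) = q"
proof -
  obtain \<psi> y where q: "q = (\<psi>, y)" by fastforce
  have "\<psi> \<in> extensional (carrier Gam)" using assms q by (auto simp: HOMs_def)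
  then show ?thesis unfolding q
    by (auto simp: fix_to_sector_def sector_to_fix_def fun_eq_iff extensional_def)
qed

lemma sector_to_fix_equivariant:
  assumes "p \<in> sector_points Gam (action_gpd G act Y)"
  shows "sector_to_fix Gam (sector_act Gam (action_gpd G act Y) (g, fst p) p)
         = fix_act Gam G act g (sector_to_fix Gam p)"
proof -
  obtain y \<phi> where p: "p = (y, \<phi>)" by fastforce
  have "snd (\<phi> \<gamma>) = y" if "\<gamma> \<in> carrier Gam" for \<gamma>
    using assms that unfolding p action_sector_points_iff by blast
  then show ?thesis unfolding p
    by (auto simp: sector_to_fix_def sector_act_def fix_act_def action_gpd_def split_beta fun_eq_iff)
qed

section \<open>The homeomorphism of object spaces\<close>

lemma continuous_map_fix_coprod_point: "continuous_map (fix_coprod Gam G act Y) Y snd"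
  unfolding fix_coprod_def
  by (rule continuous_map_from_sum_topology)
     (simp add: continuous_map_from_subtopology[OF continuous_map_id, unfolded id_def])

lemma continuous_map_fix_to_sector:
  assumes "group Gam"
  shows "continuous_map (fix_coprod Gam G act Y) (sector_top Gam (action_gpd G act Y)) (fix_to_sector Gam)"
  unfolding sector_top_def
proof (rule continuous_map_pullback')
  show "topspace (fix_coprod Gam G act Y) \<subseteq> fix_to_sector Gam -` sector_points Gam (action_gpd G act Y)"
    using fix_to_sector_in[OF assms, of _ G act Y] by (auto simp: topspace_fix_coprod)
  note point = continuous_map_fix_coprod_point[of Gam G act Y]
  have eval: "continuous_map (fix_coprod Gam G act Y) (discrete_topology (carrier G)) (\<lambda>q. fst q \<gamma>)"
    if "\<gamma> \<in> carrier Gam" for \<gamma>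
    unfolding fix_coprod_def
    by (intro continuous_map_from_sum_topology) (use that in \<open>auto simp: HOMs_def hom_def\<close>)
  have "continuous_map (fix_coprod Gam G act Y)
          (product_topology (\<lambda>_. prod_topology (discrete_topology (carrier G)) Y) (carrier Gam))
          (\<lambda>q. \<lambda>\<gamma>\<in>carrier Gam. (fst q \<gamma>, snd q))"
    unfolding continuous_map_componentwise
    using point eval by (auto intro: continuous_map_pairedI)
  then show "continuous_map (fix_coprod Gam G act Y)
      (prod_topology (tg_obj (action_gpd G act Y)) (product_topology (\<lambda>_. tg_arr (action_gpd G act Y)) (carrier Gam)))
      ((\<lambda>(x,\<phi>). (x, \<lambda>\<gamma>\<in>carrier Gam. \<phi> \<gamma>)) \<circ> fix_to_sector Gam)"
    using point by (simp add: action_gpd_def fix_to_sector_def o_def continuous_map_pairedI)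
qed

text \<open>The key use of finite generation: the set of sectors whose homomorphism is a given
  \<psi> is cut out by finitely many conditions \<phi>(s) \<in> {\<psi> s} \<times> Y on generators s, each open
  because G is discrete.\<close>

lemma sector_hom_fibre_open:
  assumes Gam: "group Gam" and G: "group G"
    and gen: "finite S" "S \<subseteq> carrier Gam" "generate Gam S = carrier Gam"
    and \<psi>: "\<psi> \<in> HOMs Gam G"
  shows "openin (sector_top Gam (action_gpd G act Y))
           {p \<in> topspace (sector_top Gam (action_gpd G act Y)). fst (sector_to_fix Gam p) = \<psi>}"
proof -
  let ?T = "sector_top Gam (action_gpd G act Y)"
  define C where "C s = {p \<in> topspace ?T. snd p s \<in> {\<psi> s} \<times> topspace Y}" for s
  have C_open: "openin ?T (C s)" if s: "s \<in> S" for s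
  proof -
    have "\<psi> s \<in> carrier G" using \<psi> s gen(2) by (auto simp: HOMs_def hom_def)
    then have "openin (tg_arr (action_gpd G act Y)) ({\<psi> s} \<times> topspace Y)"
      by (simp add: action_gpd_def openin_prod_Times_iff)
    then show ?thesis unfolding C_def
      using s gen(2) by (intro openin_continuous_map_preimage[OF continuous_map_sector_eval]) auto
  qed
  have "{p \<in> topspace ?T. fst (sector_to_fix Gam p) = \<psi>} = topspace ?T \<inter> \<Inter> (C ` S)"
  proof (intro equalityI subsetI)
    fix p assume "p \<in> {p \<in> topspace ?T. fst (sector_to_fix Gam p) = \<psi>}"
    moreover obtain y \<phi> where "p = (y, \<phi>)" by fastforce
    ultimately show "p \<in> topspace ?T \<inter> \<Inter> (C ` S)"
      using gen(2) by (auto simp: C_def topspace_sector_top action_sector_points_iff sector_to_fix_def mem_Times_iff)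
  next
    fix p assume p: "p \<in> topspace ?T \<inter> \<Inter> (C ` S)"
    then have "p \<in> sector_points Gam (action_gpd G act Y)" by (simp add: topspace_sector_top)
    then have hom: "fst (sector_to_fix Gam p) \<in> HOMs Gam G"
      using sector_to_fix_in[OF Gam] by (metis mem_Sigma_iff prod.collapse)
    have "fst (sector_to_fix Gam p) \<gamma> = \<psi> \<gamma>" if "\<gamma> \<in> carrier Gam" for \<gamma>
    proof (rule hom_eq_on_generate[OF Gam G _ _ gen(2)])
      show "\<forall>s\<in>S. fst (sector_to_fix Gam p) s = \<psi> s"
        using p gen(2) by (auto simp: C_def sector_to_fix_def)
    qed (use hom \<psi> that gen(3) in \<open>auto simp: HOMs_def\<close>)
    then have "fst (sector_to_fix Gam p) = \<psi>"
      using hom \<psi> unfolding HOMs_def by (intro extensionalityI[of _ "carrier Gam"]) auto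
    then show "p \<in> {p \<in> topspace ?T. fst (sector_to_fix Gam p) = \<psi>}" using p by simp
  qed
  then show ?thesis using gen(1) C_open by (auto intro!: openin_Int_Inter)
qed

lemma continuous_map_sector_to_fix:
  assumes Gam: "group Gam" and G: "group G"
    and gen: "finite S" "S \<subseteq> carrier Gam" "generate Gam S = carrier Gam"
  shows "continuous_map (sector_top Gam (action_gpd G act Y)) (fix_coprod Gam G act Y) (sector_to_fix Gam)"
  unfolding fix_coprod_def
proof (rule continuous_map_into_sum_topology)
  let ?T = "sector_top Gam (action_gpd G act Y)"
  have "Sigma (HOMs Gam G) (topspace \<circ> (\<lambda>\<psi>. subtopology Y (fixset Gam act Y \<psi>)))
        = Sigma (HOMs Gam G) (fixset Gam act Y)"
    using topspace_fix_coprod[of Gam G act Y] by (simp add: fix_coprod_def)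
  then show "sector_to_fix Gam \<in> topspace ?T \<rightarrow>
      Sigma (HOMs Gam G) (topspace \<circ> (\<lambda>\<psi>. subtopology Y (fixset Gam act Y \<psi>)))"
    using sector_to_fix_in[OF Gam] by (auto simp: topspace_sector_top)
  fix \<psi> assume \<psi>: "\<psi> \<in> HOMs Gam G"
  show "openin ?T {p \<in> topspace ?T. fst (sector_to_fix Gam p) = \<psi>}"
    by (rule sector_hom_fibre_open[OF Gam G gen \<psi>])
  have "continuous_map ?T Y (snd \<circ> sector_to_fix Gam)"
    using continuous_map_sector_base[of Gam "action_gpd G act Y"]
    by (simp add: action_gpd_def sector_to_fix_def o_def)
  moreover have "snd (sector_to_fix Gam p) \<in> fixset Gam act Y \<psi>"
    if "p \<in> topspace ?T" "fst (sector_to_fix Gam p) = \<psi>" for p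
    using sector_to_fix_in[OF Gam, of p G act Y] that
    by (metis mem_Sigma_iff prod.collapse topspace_sector_top)
  ultimately show "continuous_map (subtopology ?T {p \<in> topspace ?T. fst (sector_to_fix Gam p) = \<psi>})
               (subtopology Y (fixset Gam act Y \<psi>)) (snd \<circ> sector_to_fix Gam)"
    by (intro continuous_map_into_subtopology continuous_map_from_subtopology) auto
qed

lemma homeomorphic_map_sector_to_fix:
  assumes "group Gam" "group G"
    and "finite S" "S \<subseteq> carrier Gam" "generate Gam S = carrier Gam"
  shows "homeomorphic_map (sector_top Gam (action_gpd G act Y)) (fix_coprod Gam G act Y) (sector_to_fix Gam)"
  unfolding homeomorphic_map_maps homeomorphic_maps_def
  using continuous_map_sector_to_fix[OF assms] continuous_map_fix_to_sector[OF assms(1), of G act Y]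
    fix_to_sector_to_fix[of _ Gam G act Y] sector_to_fix_to_sector[of _ Gam G act Y]
  by (intro exI[of _ "fix_to_sector Gam"]) (auto simp: topspace_sector_top topspace_fix_coprod)

section \<open>The homeomorphism of arrow spaces\<close>

text \<open>An arrow of the sector groupoid is ((g, y), p) with y the base point of p; it
  corresponds to the arrow (g, sector_to_fix p) of G \<ltimes> \<coprod> Y^<\<psi>>.\<close>

lemma homeomorphic_map_sector_arrows:
  assumes Gam: "group Gam" and G: "group G"
    and gen: "finite S" "S \<subseteq> carrier Gam" "generate Gam S = carrier Gam"
  shows "homeomorphic_map (tg_arr (sector_gpd Gam (action_gpd G act Y)))
           (tg_arr (action_gpd G (fix_act Gam G act) (fix_coprod Gam G act Y)))
           (\<lambda>(a, p). (fst a, sector_to_fix Gam p))"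
proof -
  let ?T = "sector_top Gam (action_gpd G act Y)"
  let ?FC = "fix_coprod Gam G act Y"
  let ?D = "discrete_topology (carrier G)"
  have arrA: "tg_arr (sector_gpd Gam (action_gpd G act Y))
      = subtopology (prod_topology (prod_topology ?D Y) ?T) {(a, p). snd a = fst p}"
    by (simp add: sector_gpd_def action_gpd_def split_beta)
  have arrB: "tg_arr (action_gpd G (fix_act Gam G act) ?FC) = prod_topology ?D ?FC"
    by (simp add: action_gpd_def)
  note point = continuous_map_fix_coprod_point[of Gam G act Y]
  show ?thesis
    unfolding homeomorphic_map_maps homeomorphic_maps_def arrA arrB
  proof (intro exI[of _ "\<lambda>(g, q). ((g, snd q), fix_to_sector Gam q)"] conjI ballI)
    show "continuous_map (subtopology (prod_topology (prod_topology ?D Y) ?T) {(a, p). snd a = fst p})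
            (prod_topology ?D ?FC) (\<lambda>(a, p). (fst a, sector_to_fix Gam p))"
      unfolding split_beta
      by (intro continuous_map_pairedI continuous_map_from_subtopology
          continuous_map_compose[OF continuous_map_fst continuous_map_fst, unfolded o_def]
          continuous_map_compose[OF continuous_map_snd continuous_map_sector_to_fix[OF Gam G gen], unfolded o_def])
    show "continuous_map (prod_topology ?D ?FC)
            (subtopology (prod_topology (prod_topology ?D Y) ?T) {(a, p). snd a = fst p})
            (\<lambda>(g, q). ((g, snd q), fix_to_sector Gam q))"
      unfolding split_beta
      by (intro continuous_map_into_subtopology continuous_map_pairedI continuous_map_fst
          continuous_map_compose[OF continuous_map_snd point, unfolded o_def]
          continuous_map_compose[OF continuous_map_snd continuous_map_fix_to_sector[OF Gam], unfolded o_def])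
         (auto simp: fix_to_sector_def)
  next
    fix x assume "x \<in> topspace (subtopology (prod_topology (prod_topology ?D Y) ?T) {(a, p). snd a = fst p})"
    then obtain g y p where x: "x = ((g, y), p)" "p \<in> sector_points Gam (action_gpd G act Y)" "y = fst p"
      by (auto simp: topspace_sector_top)
    show "(\<lambda>(g, q). ((g, snd q), fix_to_sector Gam q)) ((\<lambda>(a, p). (fst a, sector_to_fix Gam p)) x) = x"
      using fix_to_sector_to_fix[OF x(2)] x by (simp add: sector_to_fix_def)
  next
    fix x assume "x \<in> topspace (prod_topology ?D ?FC)"
    then obtain g q where x: "x = (g, q)" "q \<in> Sigma (HOMs Gam G) (fixset Gam act Y)"
      by (auto simp: topspace_fix_coprod)
    show "(\<lambda>(a, p). (fst a, sector_to_fix Gam p)) ((\<lambda>(g, q). ((g, snd q), fix_to_sector Gam q)) x) = x"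
      using sector_to_fix_to_sector[OF x(2)] x by (simp add: fix_to_sector_def)
  qed
qed

theorem mainTheorem5:
  fixes G :: "('g, 'n) monoid_scheme"
    and Y :: "'y topology"
    and act :: "'g \<Rightarrow> 'y \<Rightarrow> 'y"
    and Gam :: "('c, 'm) monoid_scheme"
  assumes "t1_space Y"
    and "group_action G (topspace Y) act"
    and "\<forall>g\<in>carrier G. continuous_map Y Y (act g)"
    and "\<forall>y\<in>topspace Y. finite {g\<in>carrier G. act g y = y}"
    and "group Gam"
    and "\<exists>S. finite S \<and> S \<subseteq> carrier Gam \<and> generate Gam S = carrier Gam"
  shows "tgpd_isomorphic (sector_gpd Gam (action_gpd G act Y))
                         (action_gpd G (fix_act Gam G act) (fix_coprod Gam G act Y))"
proof -
  have G: "group G" using assms(2) by (simp add: group_action_def group_hom_def)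
  obtain S where gen: "finite S" "S \<subseteq> carrier Gam" "generate Gam S = carrier Gam"
    using assms(6) by blast
  let ?A = "sector_gpd Gam (action_gpd G act Y)"
  let ?B = "action_gpd G (fix_act Gam G act) (fix_coprod Gam G act Y)"
  let ?F1 = "\<lambda>(a, p). (fst a, sector_to_fix Gam p)"
  have src_tgt: "tg_src ?B (?F1 x) = sector_to_fix Gam (tg_src ?A x) \<and>
                 tg_tgt ?B (?F1 x) = sector_to_fix Gam (tg_tgt ?A x)"
    if "x \<in> topspace (tg_arr ?A)" for x
  proof -
    obtain g y p where x: "x = ((g, y), p)" by (metis prod.collapse)
    with that have "y = fst p" "p \<in> sector_points Gam (action_gpd G act Y)"
      by (auto simp: sector_gpd_def action_gpd_def topspace_sector_top)
    then show ?thesis using sector_to_fix_equivariant[of p Gam G act Y g]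
      unfolding x by (simp add: sector_gpd_def action_gpd_def)
  qed
  (* composition and identities are preserved by the very definitions of both groupoids *)
  show ?thesis unfolding tgpd_isomorphic_def tgpd_iso_def
    using homeomorphic_map_sector_to_fix[OF assms(5) G gen]
      homeomorphic_map_sector_arrows[OF assms(5) G gen] src_tgt
    by (intro exI[of _ "sector_to_fix Gam"] exI[of _ ?F1])
       (auto simp: sector_gpd_def action_gpd_def split_beta)
qed

end
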